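(* Let $G$ be a $(C_4,\text{diamond})$-free graph and $1\le k\le |V(G)|-1$. Let $e=ab$ be an edge of $G$ such that $G\setminus\{a,b\}$ is connected. Then the set of edges $AB$ of $F_k(G)$ with $A\triangle B=\{a,b\}$ forms a ladder class of $F_k(G)$.
   Context: $F_k(G)$ is the graph on the $k$-subsets of $V(G)$ with $A,B$ adjacent iff $A\triangle B$ is an edge of $G$. A diamond is $K_4$ minus an edge; $(C_4,\text{diamond})$-free means no induced $4$-cycle and no induced diamond. A ladder is a graph isomorphic to $K_2\square P_m$, $m\ge1$ (with $K_2$ on $\{x,y\}$ and $P_m$ the path $v_1\cdots v_{m+1}$); for $m\ge2$ its rungs are the edges $(x,v_i)(y,v_i)$, and for $m=1$ the rungs may be either pair of disjoint edges. Two edges of a graph $F$ are connected by a ladder if some induced subgraph of $F$ isomorphic to a ladder has them as rungs; the ladder classes are the equivalence classes of the (smallest equivalence relation containing) this relation on $E(F)$. *)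

theory Defs
  imports Main
begin

definition simple_graph :: "'a set \<Rightarrow> 'a set set \<Rightarrow> bool" where
  "simple_graph V E \<longleftrightarrow> finite V \<and> (\<forall>e\<in>E. e \<subseteq> V \<and> card e = 2)"

definition symdiff :: "'a set \<Rightarrow> 'a set \<Rightarrow> 'a set" where
  "symdiff A B = (A - B) \<union> (B - A)"

definition token_V :: "'a set \<Rightarrow> nat \<Rightarrow> 'a set set" where
  "token_V V k = {A. A \<subseteq> V \<and> card A = k}"

definition token_E :: "'a set \<Rightarrow> 'a set set \<Rightarrow> nat \<Rightarrow> 'a set set set" where
  "token_E V E k = {{A, B} | A B. A \<in> token_V V k \<and> B \<in> token_V V k \<and> symdiff A B \<in> E}"

definition induced_E :: "'a set set \<Rightarrow> 'a set \<Rightarrow> 'a set set" where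
  "induced_E E S = {e \<in> E. e \<subseteq> S}"

definition connected_graph :: "'a set \<Rightarrow> 'a set set \<Rightarrow> bool" where
  "connected_graph V E \<longleftrightarrow>
     (\<forall>u\<in>V. \<forall>v\<in>V. (u, v) \<in> {(x, y). {x, y} \<in> E}\<^sup>*)"

definition C4_free :: "'a set \<Rightarrow> 'a set set \<Rightarrow> bool" where
  "C4_free V E \<longleftrightarrow> \<not> (\<exists>a\<in>V. \<exists>b\<in>V. \<exists>c\<in>V. \<exists>d\<in>V. distinct [a, b, c, d] \<and>
      {a, b} \<in> E \<and> {b, c} \<in> E \<and> {c, d} \<in> E \<and> {d, a} \<in> E \<and>
      {a, c} \<notin> E \<and> {b, d} \<notin> E)"

definition diamond_free :: "'a set \<Rightarrow> 'a set set \<Rightarrow> bool" where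
  "diamond_free V E \<longleftrightarrow> \<not> (\<exists>a\<in>V. \<exists>b\<in>V. \<exists>c\<in>V. \<exists>d\<in>V. distinct [a, b, c, d] \<and>
      {a, b} \<in> E \<and> {b, c} \<in> E \<and> {c, d} \<in> E \<and> {d, a} \<in> E \<and>
      {a, c} \<in> E \<and> {b, d} \<notin> E)"

(* Ladder K_2 \<box> P_m: vertices (s, i) with s :: bool (the K_2 = {x,y}), 0 \<le> i \<le> m
   (path v_0 ... v_m, i.e. m+1 vertices). *)
definition ladder_verts :: "nat \<Rightarrow> (bool \<times> nat) set" where
  "ladder_verts m = UNIV \<times> {0..m}"

definition ladder_adj :: "(bool \<times> nat) \<Rightarrow> (bool \<times> nat) \<Rightarrow> bool" where
  "ladder_adj u v \<longleftrightarrow> (snd u = snd v \<and> fst u \<noteq> fst v) \<or>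
                       (fst u = fst v \<and> (snd v = Suc (snd u) \<or> snd u = Suc (snd v)))"

definition induced_ladder :: "'a set \<Rightarrow> 'a set set \<Rightarrow> nat \<Rightarrow> (bool \<times> nat \<Rightarrow> 'a) \<Rightarrow> bool" where
  "induced_ladder V E m \<phi> \<longleftrightarrow> 1 \<le> m \<and> inj_on \<phi> (ladder_verts m) \<and> \<phi> ` ladder_verts m \<subseteq> V \<and>
     (\<forall>u\<in>ladder_verts m. \<forall>v\<in>ladder_verts m. {\<phi> u, \<phi> v} \<in> E \<longleftrightarrow> ladder_adj u v)"

definition ladder_rungs :: "nat \<Rightarrow> (bool \<times> nat \<Rightarrow> 'a) \<Rightarrow> 'a set set" where
  "ladder_rungs m \<phi> = {{\<phi> (False, i), \<phi> (True, i)} | i. i \<le> m}"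

(* for m = 1 the alternative choice of rungs: the other pair of disjoint edges of the 4-cycle *)
definition ladder_alt_rungs :: "(bool \<times> nat \<Rightarrow> 'a) \<Rightarrow> 'a set set" where
  "ladder_alt_rungs \<phi> = {{\<phi> (False, 0), \<phi> (False, 1)}, {\<phi> (True, 0), \<phi> (True, 1)}}"

definition connected_by_ladder :: "'a set \<Rightarrow> 'a set set \<Rightarrow> 'a set \<Rightarrow> 'a set \<Rightarrow> bool" where
  "connected_by_ladder V E e1 e2 \<longleftrightarrow>
     (\<exists>m \<phi>. induced_ladder V E m \<phi> \<and>
        ((e1 \<in> ladder_rungs m \<phi> \<and> e2 \<in> ladder_rungs m \<phi>) \<or>
         (m = 1 \<and> e1 \<in> ladder_alt_rungs \<phi> \<and> e2 \<in> ladder_alt_rungs \<phi>)))"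

definition ladder_rel :: "'a set \<Rightarrow> 'a set set \<Rightarrow> ('a set \<times> 'a set) set" where
  "ladder_rel V E = {(e1, e2). e1 \<in> E \<and> e2 \<in> E \<and> connected_by_ladder V E e1 e2}"

definition ladder_equiv :: "'a set \<Rightarrow> 'a set set \<Rightarrow> ('a set \<times> 'a set) set" where
  "ladder_equiv V E = Id_on E \<union> (ladder_rel V E \<union> (ladder_rel V E)\<inverse>)\<^sup>+"

definition ladder_classes :: "'a set \<Rightarrow> 'a set set \<Rightarrow> 'a set set set" where
  "ladder_classes V E = E // ladder_equiv V E"

end

theory Submission
  imports Defs
begin

text \<open>
  An edge {A, B} of \<open>F\<^sub>k(G)\<close> moves one token along the edge \<open>A \<triangle> B\<close> of G. As G is
  (C4, diamond)-free, every 4-cycle of G has both chords, and from this one checks that opposite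
  edges of an induced 4-cycle of \<open>F\<^sub>k(G)\<close> move tokens along the same edge of G. Consecutive rungs
  of an induced ladder span such 4-cycles, so all edges of a ladder class move along one edge of G.

  Conversely, the edges moving along ab are exactly the edges {X + a, X + b} for the (k-1)-subsets X
  of V - {a, b}. A token move from X to Y along an edge of G - {a, b} makes X + a, X + b, Y + b, Y + a
  an induced 4-cycle, i.e. a ladder whose rungs are the two lifted edges. Since G - {a, b} is
  connected, so is its token graph \<open>F\<^sub>k\<^sub>-\<^sub>1\<close>, and all these edges lie in one ladder class.
\<close>

lemma symdiff_commute: "symdiff A B = symdiff B A"
  unfolding symdiff_def by auto

lemma symdiff_symdiff_cancel: "symdiff (symdiff A B) (symdiff B C) = symdiff A C"
  unfolding symdiff_def by auto

lemma symdiff_self: "symdiff A A = {}"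
  unfolding symdiff_def by auto

lemma symdiff_eq_empty_iff: "symdiff A B = {} \<longleftrightarrow> A = B"
  unfolding symdiff_def by auto

lemma symdiff_insert_insert:
  assumes "a \<notin> X" "a \<notin> Y" "b \<notin> X" "b \<notin> Y"
  shows "symdiff (insert a X) (insert b Y) = (if a = b then {} else {a, b}) \<union> symdiff X Y"
  using assms unfolding symdiff_def by auto

lemma symdiff_nonempty_neq: "symdiff A B \<noteq> {} \<Longrightarrow> A \<noteq> B"
  by (auto simp: symdiff_self)

lemma symdiff_eq_doubletonE:
  assumes "finite A" "finite B" "card A = card B" "symdiff A B = {s, r}" "s \<noteq> r" "s \<in> A"
  obtains C where "A = insert s C" "B = insert r C" "s \<notin> C" "r \<notin> C"
proof -
  have card_diff: "card (A - B) = card (B - A)"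
    using assms(1-3) by (simp add: card_Diff_subset_Int Int_commute)
  have "r \<notin> A"
  proof
    assume "r \<in> A"
    then have "A - B = {s, r}" "B - A = {}"
      using assms(4,6) unfolding symdiff_def by blast+
    then have "card {s, r} = 0" using card_diff by (metis card.empty)
    then show False using assms(5) by simp
  qed
  then have "A = insert s (A \<inter> B)" "B = insert r (A \<inter> B)" "s \<notin> A \<inter> B" "r \<notin> A \<inter> B"
    using assms(4,6) unfolding symdiff_def by blast+
  then show ?thesis by (rule that)
qed

lemma symdiff_doubletons_eq_doubleton:
  assumes "card e = 2" "card f = 2" "symdiff e f = {s, r}" "s \<noteq> r"
  obtains t where "t \<notin> {s, r}" "{e, f} = {{s, t}, {r, t}}"
proof -
  have shared: "\<exists>t. t \<notin> {s, r} \<and> e = {s, t} \<and> f = {r, t}"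
    if prems: "card e = 2" "card f = 2" "symdiff e f = {s, r}" "s \<noteq> r" "s \<in> e" for e f s r
  proof -
    have "finite e" "finite f" "card e = card f" using prems(1,2) card.infinite by fastforce+
    then obtain C where C: "e = insert s C" "f = insert r C" "s \<notin> C" "r \<notin> C"
      by (rule symdiff_eq_doubletonE[OF _ _ _ prems(3-5)])
    then have "card C = 1" using prems(1) \<open>finite e\<close> by simp
    then obtain t where "C = {t}" by (auto simp: card_1_singleton_iff)
    then show ?thesis using C by (intro exI[of _ t]) auto
  qed
  show ?thesis
  proof (cases "s \<in> e")
    case True
    then show ?thesis using shared[OF assms] that by blast
  next
    case False
    then have "s \<in> f" using assms(3) unfolding symdiff_def by blast
    then obtain t where "t \<notin> {s, r}" "f = {s, t}" "e = {r, t}"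
      using shared[OF assms(2,1) _ assms(4)] assms(3) symdiff_commute by metis
    then show ?thesis using that by (simp add: insert_commute)
  qed
qed

lemma doubleton_with_member:
  assumes "card e = 2" "x \<in> e"
  obtains y where "e = {x, y}" "y \<noteq> x"
  using assms by (metis card_2_iff empty_iff insert_commute insert_iff)

section \<open>Moves around a 4-cycle\<close>

definition chorded_4cycles :: "'a set set \<Rightarrow> bool" where
  "chorded_4cycles E \<longleftrightarrow> (\<forall>a b c d. distinct [a, b, c, d] \<longrightarrow>
     {a, b} \<in> E \<longrightarrow> {b, c} \<in> E \<longrightarrow> {c, d} \<in> E \<longrightarrow> {d, a} \<in> E \<longrightarrow> {a, c} \<in> E)"

lemma chorded_4cyclesD:
  "chorded_4cycles E \<Longrightarrow> distinct [a, b, c, d] \<Longrightarrow>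
    {a, b} \<in> E \<Longrightarrow> {b, c} \<in> E \<Longrightarrow> {c, d} \<in> E \<Longrightarrow> {d, a} \<in> E \<Longrightarrow> {a, c} \<in> E"
  unfolding chorded_4cycles_def by blast

lemma diamond_freeD:
  assumes "diamond_free V E" "a \<in> V" "b \<in> V" "c \<in> V" "d \<in> V" "distinct [a, b, c, d]"
    "{a, b} \<in> E" "{b, c} \<in> E" "{c, d} \<in> E" "{d, a} \<in> E" "{a, c} \<in> E"
  shows "{b, d} \<in> E"
  using assms unfolding diamond_free_def by blast

lemma C4_freeD:
  assumes "C4_free V E" "a \<in> V" "b \<in> V" "c \<in> V" "d \<in> V" "distinct [a, b, c, d]"
    "{a, b} \<in> E" "{b, c} \<in> E" "{c, d} \<in> E" "{d, a} \<in> E" "{b, d} \<notin> E"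
  shows "{a, c} \<in> E"
  using assms unfolding C4_free_def by blast

lemma C4_diamond_free_chorded_4cycles:
  assumes "simple_graph V E" "C4_free V E" "diamond_free V E"
  shows "chorded_4cycles E"
  unfolding chorded_4cycles_def
proof (intro allI impI)
  fix a b c d
  assume cycle: "distinct [a, b, c, d]" "{a, b} \<in> E" "{b, c} \<in> E" "{c, d} \<in> E" "{d, a} \<in> E"
  then have V: "a \<in> V" "b \<in> V" "c \<in> V" "d \<in> V"
    using assms(1) unfolding simple_graph_def by blast+
  show "{a, c} \<in> E"
  proof (cases "{b, d} \<in> E")
    case True
    have "distinct [b, c, d, a]" using cycle(1) by auto
    from diamond_freeD[OF assms(3) V(2-4,1) this cycle(3-5,2) True]
    show ?thesis by (simp add: insert_commute)
  next
    case False
    from C4_freeD[OF assms(2) V cycle False] show ?thesis .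
  qed
qed

lemma opposite_edges_eq_if_meeting:
  assumes chorded: "chorded_4cycles E" and two: "\<forall>e\<in>E. card e = 2"
    and edges: "{s, t} \<in> E" "{t, r} \<in> E" "e3 \<in> E" "e4 \<in> E" and "distinct [s, t, r]"
    and "symdiff e3 e4 = {s, r}" "{s, r} \<notin> E" "e3 \<noteq> {t, r}"
  shows "e3 = {s, t}"
proof -
  have "s \<noteq> r" using \<open>distinct [s, t, r]\<close> by simp
  obtain t' where t': "t' \<notin> {s, r}" "{e3, e4} = {{s, t'}, {r, t'}}"
    by (rule symdiff_doubletons_eq_doubleton[OF two[rule_format, OF edges(3)]
          two[rule_format, OF edges(4)] \<open>symdiff e3 e4 = {s, r}\<close> \<open>s \<noteq> r\<close>])
  have "{s, t'} \<in> {e3, e4}" "{r, t'} \<in> {e3, e4}" using t'(2) by simp_all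
  then have "{s, t'} \<in> E" "{r, t'} \<in> E" using edges(3,4) by auto
  have "t' = t"
  proof (rule ccontr)
    assume "t' \<noteq> t"
    then have "distinct [s, t, r, t']" using \<open>distinct [s, t, r]\<close> t'(1) by auto
    moreover have "{t', s} \<in> E" using \<open>{s, t'} \<in> E\<close> by (simp add: insert_commute)
    ultimately have "{s, r} \<in> E"
      using chorded_4cyclesD[OF chorded _ edges(1,2) \<open>{r, t'} \<in> E\<close>] by blast
    then show False using \<open>{s, r} \<notin> E\<close> by contradiction
  qed
  then have "e3 \<in> {{s, t}, {t, r}}" using t'(2) by (simp add: insert_commute) blast
  then show ?thesis using \<open>e3 \<noteq> {t, r}\<close> by blast
qed

lemma opposite_edges_eq_if_disjoint:
  assumes chorded: "chorded_4cycles E" and two: "\<forall>e\<in>E. card e = 2"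
    and edges: "e1 \<in> E" "e2 \<in> E" "e3 \<in> E" "e4 \<in> E" and "e1 \<inter> e2 = {}"
    and "symdiff e3 e4 = e1 \<union> e2" "symdiff e2 e3 \<notin> E" "e2 \<noteq> e3"
  shows "e3 = e1"
proof -
  have card2: "card e1 = 2" "card e2 = 2" "card e3 = 2" "card e4 = 2" using two edges by auto
  then have fin: "finite e1" "finite e2" "finite e3" "finite e4"
    by (metis card.infinite zero_neq_numeral)+
  have "card (e1 \<union> e2) = 4" using card_Un_disjoint[OF fin(1,2) \<open>e1 \<inter> e2 = {}\<close>] card2 by simp
  then have "card (symdiff e3 e4) = 4" using \<open>symdiff e3 e4 = e1 \<union> e2\<close> by simp
  moreover have "card (symdiff e3 e4) \<le> card (e3 \<union> e4)"
    by (rule card_mono) (use fin in \<open>auto simp: symdiff_def\<close>)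
  moreover have "card (e3 \<union> e4) + card (e3 \<inter> e4) = 4"
    using card_Un_Int[OF fin(3,4)] card2 by simp
  ultimately have "card (e3 \<inter> e4) = 0" by linarith
  then have "e3 \<inter> e4 = {}" using fin(3) by (simp add: card_eq_0_iff)
  then have cover: "e3 \<union> e4 = e1 \<union> e2"
    using \<open>symdiff e3 e4 = e1 \<union> e2\<close> unfolding symdiff_def by blast
  have no_cross: False if "x \<in> e1" "z \<in> e2" "x \<in> e3" "z \<in> e3" for x z
  proof -
    obtain y where y: "e1 = {x, y}" "y \<noteq> x" by (rule doubleton_with_member[OF card2(1) \<open>x \<in> e1\<close>])
    obtain w where w: "e2 = {z, w}" "w \<noteq> z" by (rule doubleton_with_member[OF card2(2) \<open>z \<in> e2\<close>])
    obtain z' where "e3 = {x, z'}" "z' \<noteq> x" by (rule doubleton_with_member[OF card2(3) \<open>x \<in> e3\<close>])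
    moreover have "x \<noteq> z" using that \<open>e1 \<inter> e2 = {}\<close> by blast
    ultimately have e3: "e3 = {x, z}" using \<open>z \<in> e3\<close> by blast
    have e4: "e4 = {y, w}" using cover \<open>e3 \<inter> e4 = {}\<close> y w e3 \<open>e1 \<inter> e2 = {}\<close> by auto
    have "distinct [x, y, w, z]" using y w \<open>e1 \<inter> e2 = {}\<close> by auto
    moreover have "{x, y} \<in> E" "{y, w} \<in> E" "{w, z} \<in> E" "{z, x} \<in> E"
      using edges y w e3 e4 by (simp_all add: insert_commute)
    ultimately have "{x, w} \<in> E" by (rule chorded_4cyclesD[OF chorded])
    moreover have "symdiff e2 e3 = {x, w}"
      using w e3 \<open>distinct [x, y, w, z]\<close> unfolding symdiff_def by auto
    ultimately show False using \<open>symdiff e2 e3 \<notin> E\<close> by simp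
  qed
  have "e3 \<subseteq> e1 \<union> e2" using cover by blast
  then consider "e3 \<subseteq> e1" | "e3 \<subseteq> e2" | "\<exists>x z. x \<in> e1 \<and> z \<in> e2 \<and> x \<in> e3 \<and> z \<in> e3" by blast
  then show ?thesis
  proof cases
    case 1
    then show ?thesis using card_subset_eq[OF fin(1)] card2 by simp
  next
    case 2
    then have "e3 = e2" using card_subset_eq[OF fin(2)] card2 by simp
    then show ?thesis using \<open>e2 \<noteq> e3\<close> by simp
  next
    case 3
    then show ?thesis using no_cross by blast
  qed
qed

text \<open>
  Here \<open>e\<^sub>1, \<dots>, e\<^sub>4\<close> are the moves along a closed walk P Q R T P of a token graph, so that
  \<open>e\<^sub>1 \<triangle> e\<^sub>2\<close> and \<open>e\<^sub>2 \<triangle> e\<^sub>3\<close> are the moves across its diagonals PR and QT.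
\<close>

lemma chorded_4cycles_opposite_edges_eq:
  assumes chorded: "chorded_4cycles E" and two: "\<forall>e\<in>E. card e = 2"
    and edges: "e1 \<in> E" "e2 \<in> E" "e3 \<in> E" "e4 \<in> E" and "e1 \<noteq> e2" "e2 \<noteq> e3"
    and diagonals: "symdiff e1 e2 = symdiff e3 e4" "symdiff e1 e2 \<notin> E" "symdiff e2 e3 \<notin> E"
  shows "e1 = e3"
proof (cases "e1 \<inter> e2 = {}")
  case True
  then have "symdiff e3 e4 = e1 \<union> e2" using diagonals(1) unfolding symdiff_def by blast
  from opposite_edges_eq_if_disjoint[OF chorded two edges True this diagonals(3) \<open>e2 \<noteq> e3\<close>]
  show ?thesis by (rule sym)
next
  case False
  then obtain t where "t \<in> e1" "t \<in> e2" by blast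
  obtain s where e1: "e1 = {t, s}" "s \<noteq> t"
    by (rule doubleton_with_member[OF two[rule_format, OF edges(1)] \<open>t \<in> e1\<close>])
  obtain r where e2: "e2 = {t, r}" "r \<noteq> t"
    by (rule doubleton_with_member[OF two[rule_format, OF edges(2)] \<open>t \<in> e2\<close>])
  have "distinct [s, t, r]" using e1 e2 \<open>e1 \<noteq> e2\<close> by auto
  have "symdiff e1 e2 = {s, r}" using e1 e2 \<open>distinct [s, t, r]\<close> unfolding symdiff_def by auto
  then have "symdiff e3 e4 = {s, r}" "{s, r} \<notin> E" using diagonals(1,2) by simp_all
  moreover have "{s, t} \<in> E" "{t, r} \<in> E" "e3 \<noteq> {t, r}"
    using edges(1,2) e1 e2 \<open>e2 \<noteq> e3\<close> by (simp_all add: insert_commute)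
  ultimately have "e3 = {s, t}"
    using opposite_edges_eq_if_meeting[OF chorded two _ _ edges(3,4) \<open>distinct [s, t, r]\<close>] by blast
  then show ?thesis using e1 by (simp add: insert_commute)
qed

section \<open>Ladder classes preserve the moved edge\<close>

definition induced_4cycle :: "'a set \<Rightarrow> 'a set set \<Rightarrow> 'a \<Rightarrow> 'a \<Rightarrow> 'a \<Rightarrow> 'a \<Rightarrow> bool" where
  "induced_4cycle V E p q r t \<longleftrightarrow> distinct [p, q, r, t] \<and> {p, q, r, t} \<subseteq> V \<and>
     {p, q} \<in> E \<and> {q, r} \<in> E \<and> {r, t} \<in> E \<and> {t, p} \<in> E \<and> {p, r} \<notin> E \<and> {q, t} \<notin> E"

lemma mem_token_E:
  "e \<in> token_E V E k \<longleftrightarrow> (\<exists>A B. e = {A, B} \<and> A \<in> token_V V k \<and> B \<in> token_V V k \<and> symdiff A B \<in> E)"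
  unfolding token_E_def by (rule mem_Collect_eq)

lemma token_edge_iff:
  assumes "A \<in> token_V V k" "B \<in> token_V V k"
  shows "{A, B} \<in> token_E V E k \<longleftrightarrow> symdiff A B \<in> E"
proof
  assume "{A, B} \<in> token_E V E k"
  then obtain A' B' where "{A, B} = {A', B'}" "symdiff A' B' \<in> E"
    unfolding mem_token_E by (elim exE conjE) (rule that; assumption)
  then consider "A = A'" "B = B'" | "A = B'" "B = A'" unfolding doubleton_eq_iff by blast
  then show "symdiff A B \<in> E"
    by cases (use \<open>symdiff A' B' \<in> E\<close> symdiff_commute[of B A] in simp_all)
next
  assume "symdiff A B \<in> E"
  then show "{A, B} \<in> token_E V E k" unfolding mem_token_E using assms by blast
qed

lemma token_induced_4cycle_opposite_moves_eq:
  assumes chorded: "chorded_4cycles E" and two: "\<forall>e\<in>E. card e = 2"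
    and "induced_4cycle (token_V V k) (token_E V E k) P Q R T"
  shows "symdiff P Q = symdiff R T"
proof -
  have V: "P \<in> token_V V k" "Q \<in> token_V V k" "R \<in> token_V V k" "T \<in> token_V V k"
    and "P \<noteq> R" "Q \<noteq> T"
    using assms(3) unfolding induced_4cycle_def by auto
  have edges: "symdiff P Q \<in> E" "symdiff Q R \<in> E" "symdiff R T \<in> E" "symdiff T P \<in> E"
    and diagonals: "symdiff P R \<notin> E" "symdiff Q T \<notin> E"
    using assms(3) V unfolding induced_4cycle_def by (simp_all add: token_edge_iff)
  have "symdiff P Q \<noteq> symdiff Q R"
  proof
    assume "symdiff P Q = symdiff Q R"
    then have "symdiff P R = {}" using symdiff_symdiff_cancel[of P Q R] by (simp add: symdiff_self)
    then show False using \<open>P \<noteq> R\<close> by (simp add: symdiff_eq_empty_iff)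
  qed
  moreover have "symdiff Q R \<noteq> symdiff R T"
  proof
    assume "symdiff Q R = symdiff R T"
    then have "symdiff Q T = {}" using symdiff_symdiff_cancel[of Q R T] by (simp add: symdiff_self)
    then show False using \<open>Q \<noteq> T\<close> by (simp add: symdiff_eq_empty_iff)
  qed
  moreover have "symdiff (symdiff P Q) (symdiff Q R) = symdiff (symdiff R T) (symdiff T P)"
    by (simp add: symdiff_symdiff_cancel symdiff_commute[of P R])
  moreover have "symdiff (symdiff P Q) (symdiff Q R) \<notin> E" "symdiff (symdiff Q R) (symdiff R T) \<notin> E"
    using diagonals by (simp_all add: symdiff_symdiff_cancel)
  ultimately show ?thesis by (rule chorded_4cycles_opposite_edges_eq[OF chorded two edges])
qed

lemma ladder_adj_iff:
  "ladder_adj (s, i) (t, j) \<longleftrightarrow> (i = j \<and> s \<noteq> t) \<or> (s = t \<and> (j = Suc i \<or> i = Suc j))"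
  unfolding ladder_adj_def by auto

lemma induced_ladder_induced_4cycle:
  assumes "induced_ladder V E m \<phi>" and "{u1, u2, u3, u4} \<subseteq> ladder_verts m" "distinct [u1, u2, u3, u4]"
    and "ladder_adj u1 u2" "ladder_adj u2 u3" "ladder_adj u3 u4" "ladder_adj u4 u1"
    and "\<not> ladder_adj u1 u3" "\<not> ladder_adj u2 u4"
  shows "induced_4cycle V E (\<phi> u1) (\<phi> u2) (\<phi> u3) (\<phi> u4)"
proof -
  have inj: "inj_on \<phi> (ladder_verts m)" and img: "\<phi> ` ladder_verts m \<subseteq> V"
    and adj: "\<And>u v. u \<in> ladder_verts m \<Longrightarrow> v \<in> ladder_verts m \<Longrightarrow> {\<phi> u, \<phi> v} \<in> E \<longleftrightarrow> ladder_adj u v"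
    using assms(1) unfolding induced_ladder_def by blast+
  have "distinct [\<phi> u1, \<phi> u2, \<phi> u3, \<phi> u4]"
    using assms(3) inj_on_subset[OF inj assms(2)] by (simp add: inj_on_eq_iff)
  moreover have "{\<phi> u1, \<phi> u2, \<phi> u3, \<phi> u4} \<subseteq> V" using img assms(2) by blast
  moreover have "{\<phi> u1, \<phi> u2} \<in> E" "{\<phi> u2, \<phi> u3} \<in> E" "{\<phi> u3, \<phi> u4} \<in> E" "{\<phi> u4, \<phi> u1} \<in> E"
    "{\<phi> u1, \<phi> u3} \<notin> E" "{\<phi> u2, \<phi> u4} \<notin> E"
    using assms(2,4-9) adj by simp_all
  ultimately show ?thesis unfolding induced_4cycle_def by blast
qed

lemma token_ladder_rung_moves_eq:
  assumes chorded: "chorded_4cycles E" and two: "\<forall>e\<in>E. card e = 2"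
    and ladder: "induced_ladder (token_V V k) (token_E V E k) m \<phi>"
  shows "i \<le> m \<Longrightarrow> symdiff (\<phi> (False, i)) (\<phi> (True, i)) = symdiff (\<phi> (False, 0)) (\<phi> (True, 0))"
proof (induction i)
  case (Suc i)
  have "induced_4cycle (token_V V k) (token_E V E k)
      (\<phi> (False, i)) (\<phi> (True, i)) (\<phi> (True, Suc i)) (\<phi> (False, Suc i))"
    by (rule induced_ladder_induced_4cycle[OF ladder])
      (use Suc.prems in \<open>auto simp: ladder_verts_def ladder_adj_iff\<close>)
  then have "symdiff (\<phi> (False, i)) (\<phi> (True, i)) = symdiff (\<phi> (True, Suc i)) (\<phi> (False, Suc i))"
    by (rule token_induced_4cycle_opposite_moves_eq[OF chorded two])
  then show ?case using Suc by (simp add: symdiff_commute[of "\<phi> (True, Suc i)"])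
qed simp

definition edge_label :: "'a set set \<Rightarrow> 'a set" where
  "edge_label e = \<Union>e - \<Inter>e"

lemma edge_label_doubleton: "edge_label {A, B} = symdiff A B"
  unfolding edge_label_def symdiff_def by auto

lemma token_connected_by_ladder_same_label:
  assumes chorded: "chorded_4cycles E" and two: "\<forall>e\<in>E. card e = 2"
    and "connected_by_ladder (token_V V k) (token_E V E k) e e'"
  shows "edge_label e = edge_label e'"
proof -
  obtain m \<phi> where ladder: "induced_ladder (token_V V k) (token_E V E k) m \<phi>"
    and rungs: "e \<in> ladder_rungs m \<phi> \<and> e' \<in> ladder_rungs m \<phi> \<or>
      m = 1 \<and> e \<in> ladder_alt_rungs \<phi> \<and> e' \<in> ladder_alt_rungs \<phi>"
    using assms(3) unfolding connected_by_ladder_def by blast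
  have rung_label: "edge_label r = symdiff (\<phi> (False, 0)) (\<phi> (True, 0))"
    if rung: "r \<in> ladder_rungs m \<phi>" for r
  proof -
    obtain i where "r = {\<phi> (False, i), \<phi> (True, i)}" "i \<le> m"
      using rung unfolding ladder_rungs_def mem_Collect_eq by (elim exE conjE) (rule that; assumption)
    then show ?thesis
      using token_ladder_rung_moves_eq[OF chorded two ladder \<open>i \<le> m\<close>]
      by (simp add: edge_label_doubleton)
  qed
  have alt_rung_label: "edge_label r = symdiff (\<phi> (False, 0)) (\<phi> (False, 1))"
    if "m = 1" "r \<in> ladder_alt_rungs \<phi>" for r
  proof -
    have "induced_4cycle (token_V V k) (token_E V E k)
        (\<phi> (False, 0)) (\<phi> (False, 1)) (\<phi> (True, 1)) (\<phi> (True, 0))"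
      by (rule induced_ladder_induced_4cycle[OF ladder])
        (use \<open>m = 1\<close> in \<open>simp_all add: ladder_verts_def ladder_adj_iff\<close>)
    then have opposite: "symdiff (\<phi> (False, 0)) (\<phi> (False, 1)) = symdiff (\<phi> (True, 1)) (\<phi> (True, 0))"
      by (rule token_induced_4cycle_opposite_moves_eq[OF chorded two])
    from that(2) consider "r = {\<phi> (False, 0), \<phi> (False, 1)}" | "r = {\<phi> (True, 0), \<phi> (True, 1)}"
      unfolding ladder_alt_rungs_def by blast
    then show ?thesis
    proof cases
      case 1
      then show ?thesis by (simp add: edge_label_doubleton)
    next
      case 2
      then have "edge_label r = symdiff (\<phi> (True, 0)) (\<phi> (True, 1))" by (simp add: edge_label_doubleton)
      also have "\<dots> = symdiff (\<phi> (True, 1)) (\<phi> (True, 0))" by (rule symdiff_commute)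
      finally show ?thesis using opposite by simp
    qed
  qed
  from rungs show ?thesis
  proof (elim disjE conjE)
    assume "e \<in> ladder_rungs m \<phi>" "e' \<in> ladder_rungs m \<phi>"
    then show ?thesis by (simp add: rung_label)
  next
    assume "m = 1" "e \<in> ladder_alt_rungs \<phi>" "e' \<in> ladder_alt_rungs \<phi>"
    then show ?thesis by (simp add: alt_rung_label)
  qed
qed

lemma ladder_equiv_subset: "ladder_equiv V E \<subseteq> E \<times> E"
proof -
  have "ladder_rel V E \<union> (ladder_rel V E)\<inverse> \<subseteq> E \<times> E" unfolding ladder_rel_def by auto
  then have "(ladder_rel V E \<union> (ladder_rel V E)\<inverse>)\<^sup>+ \<subseteq> E \<times> E" by (rule trancl_subset_Sigma)
  then show ?thesis unfolding ladder_equiv_def Id_on_def by blast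
qed

lemma ladder_equiv_invariant:
  assumes "\<And>e e'. connected_by_ladder V E e e' \<Longrightarrow> f e = f e'"
    and "(e, e') \<in> ladder_equiv V E"
  shows "f e = f e'"
proof -
  have single: "f y = f z" if "(y, z) \<in> ladder_rel V E \<union> (ladder_rel V E)\<inverse>" for y z
    using that assms(1) unfolding ladder_rel_def by force
  have "f y = f z" if "(y, z) \<in> (ladder_rel V E \<union> (ladder_rel V E)\<inverse>)\<^sup>+" for y z
    using that by (induction rule: trancl_induct) (metis single, metis single)
  then show ?thesis using assms(2) unfolding ladder_equiv_def by auto
qed

lemma ladder_rel_rtrancl_ladder_equiv:
  assumes "e \<in> E" "(e, e') \<in> (ladder_rel V E)\<^sup>*"
  shows "(e, e') \<in> ladder_equiv V E"
proof -
  from assms(2) have "e = e' \<or> (e, e') \<in> (ladder_rel V E)\<^sup>+" by (meson rtranclD)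
  moreover have "(ladder_rel V E)\<^sup>+ \<subseteq> (ladder_rel V E \<union> (ladder_rel V E)\<inverse>)\<^sup>+"
    using trancl_mono by blast
  ultimately show ?thesis using assms(1) unfolding ladder_equiv_def by blast
qed

section \<open>Connectivity of token graphs\<close>

definition adjacency :: "'a set set \<Rightarrow> ('a \<times> 'a) set" where
  "adjacency E = {(u, v). {u, v} \<in> E}"

lemma connected_graph_iff_adjacency:
  "connected_graph V E \<longleftrightarrow> (\<forall>u\<in>V. \<forall>v\<in>V. (u, v) \<in> (adjacency E)\<^sup>*)"
  unfolding connected_graph_def adjacency_def ..

lemma simple_graph_induced_E:
  assumes "simple_graph V E" "S \<subseteq> V"
  shows "simple_graph S (induced_E E S)"
  using assms finite_subset unfolding simple_graph_def induced_E_def by blast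

lemma simple_graph_edge_distinct:
  assumes "simple_graph V E" "{u, v} \<in> E"
  shows "u \<noteq> v" "u \<in> V" "v \<in> V"
proof -
  have "card {u, v} = 2" "{u, v} \<subseteq> V" using assms unfolding simple_graph_def by blast+
  then show "u \<noteq> v" "u \<in> V" "v \<in> V" by (auto simp: card_2_iff)
qed

lemma token_V_finite: "finite W \<Longrightarrow> X \<in> token_V W j \<Longrightarrow> finite X"
  unfolding token_V_def using finite_subset by blast

lemma token_move:
  assumes "finite W" "X \<in> token_V W j" "x \<in> X" "y \<in> W" "y \<notin> X" "{x, y} \<in> F"
  shows "(X, insert y (X - {x})) \<in> adjacency (token_E W F j)"
proof -
  have "finite X" using token_V_finite[OF assms(1,2)] .
  then have "0 < card X" using assms(3) card_gt_0_iff by blast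
  then have "card (insert y (X - {x})) = card X" using \<open>finite X\<close> assms(3,5) by simp
  then have "insert y (X - {x}) \<in> token_V W j" using assms(2-4) unfolding token_V_def by auto
  moreover have "symdiff X (insert y (X - {x})) = {x, y}"
    using assms(3,5) unfolding symdiff_def by auto
  ultimately show ?thesis
    using assms(2,6) unfolding adjacency_def by (simp add: token_edge_iff)
qed

lemma adjacency_token_E_token_V:
  assumes "(X, Y) \<in> adjacency (token_E W F j)"
  shows "X \<in> token_V W j" "Y \<in> token_V W j"
proof -
  obtain A B where "{X, Y} = {A, B}" "A \<in> token_V W j" "B \<in> token_V W j"
    using assms unfolding adjacency_def mem_token_E by (elim CollectE case_prodE exE conjE) auto
  then have "{X, Y} \<subseteq> token_V W j" by simp
  then show "X \<in> token_V W j" "Y \<in> token_V W j" by simp_all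
qed

lemma rtrancl_adjacency_token_V:
  "(X, Y) \<in> (adjacency (token_E W F j))\<^sup>* \<Longrightarrow> X \<in> token_V W j \<Longrightarrow> Y \<in> token_V W j"
  by (induction rule: rtrancl_induct) (auto dest: adjacency_token_E_token_V)

lemma token_move_along_path:
  assumes graph: "simple_graph W F" and path: "(x, y) \<in> (adjacency F)\<^sup>*"
  shows "X \<in> token_V W j \<Longrightarrow> x \<in> X \<Longrightarrow> y \<notin> X \<Longrightarrow>
    (X, insert y (X - {x})) \<in> (adjacency (token_E W F j))\<^sup>*"
  using path
proof (induction arbitrary: X rule: converse_rtrancl_induct)
  case base
  then show ?case by simp
next
  case (step x p)
  have "{x, p} \<in> F" using step.hyps(1) unfolding adjacency_def by simp
  then have "x \<noteq> p" "p \<in> W" using simple_graph_edge_distinct[OF graph] by blast+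
  have "finite W" using graph unfolding simple_graph_def by simp
  show ?case
  proof (cases "p \<in> X")
    case True
    \<comment> \<open>the token on p travels on to y first; then the token on x moves into the vacated p\<close>
    define X1 where "X1 = insert y (X - {p})"
    have "(X, X1) \<in> (adjacency (token_E W F j))\<^sup>*"
      unfolding X1_def using step.IH step.prems True by blast
    moreover have "(X1, insert p (X1 - {x})) \<in> adjacency (token_E W F j)"
    proof (rule token_move[OF \<open>finite W\<close> _ _ \<open>p \<in> W\<close>])
      show "X1 \<in> token_V W j" using calculation step.prems(1) by (rule rtrancl_adjacency_token_V)
    qed (use \<open>{x, p} \<in> F\<close> \<open>x \<noteq> p\<close> step.prems True in \<open>auto simp: X1_def\<close>)
    moreover have "insert p (X1 - {x}) = insert y (X - {x})"
      unfolding X1_def using step.prems True \<open>x \<noteq> p\<close> by auto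
    ultimately show ?thesis by simp
  next
    case False
    define X1 where "X1 = insert p (X - {x})"
    have move: "(X, X1) \<in> adjacency (token_E W F j)"
      unfolding X1_def using token_move[OF \<open>finite W\<close>] step.prems False \<open>p \<in> W\<close> \<open>{x, p} \<in> F\<close> by blast
    show ?thesis
    proof (cases "p = y")
      case True
      then show ?thesis using move unfolding X1_def by simp
    next
      case False
      have "X1 \<in> token_V W j" using adjacency_token_E_token_V(2)[OF move] .
      then have "(X1, insert y (X1 - {p})) \<in> (adjacency (token_E W F j))\<^sup>*"
        using step.IH step.prems False unfolding X1_def by blast
      moreover have "insert y (X1 - {p}) = insert y (X - {x})"
        unfolding X1_def using \<open>p \<notin> X\<close> by auto
      ultimately show ?thesis using move by (simp add: converse_rtrancl_into_rtrancl)
    qed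
  qed
qed

lemma token_graph_connected:
  assumes graph: "simple_graph W F" and conn: "connected_graph W F"
  shows "connected_graph (token_V W j) (token_E W F j)"
  unfolding connected_graph_iff_adjacency
proof (intro ballI)
  fix X Y assume "X \<in> token_V W j" "Y \<in> token_V W j"
  then show "(X, Y) \<in> (adjacency (token_E W F j))\<^sup>*"
  proof (induction "card (X - Y)" arbitrary: X rule: less_induct)
    case less
    have "finite W" using graph unfolding simple_graph_def by simp
    then have fin: "finite X" "finite Y" using less.prems token_V_finite by blast+
    have card: "card X = card Y" using less.prems unfolding token_V_def by simp
    show ?case
    proof (cases "X = Y")
      case False
      have "\<not> X \<subseteq> Y" "\<not> Y \<subseteq> X"
        using card_subset_eq[OF fin(2)] card_subset_eq[OF fin(1)] card False by metis+
      then obtain x y where x: "x \<in> X" "x \<notin> Y" and y: "y \<in> Y" "y \<notin> X" by blast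
      define X1 where "X1 = insert y (X - {x})"
      have "x \<in> W" "y \<in> W" using x y less.prems unfolding token_V_def by blast+
      then have "(x, y) \<in> (adjacency F)\<^sup>*" using conn unfolding connected_graph_iff_adjacency by blast
      then have first: "(X, X1) \<in> (adjacency (token_E W F j))\<^sup>*"
        unfolding X1_def using token_move_along_path[OF graph] less.prems x y by blast
      have "X1 - Y = (X - Y) - {x}" unfolding X1_def using y by auto
      moreover have "card ((X - Y) - {x}) < card (X - Y)"
        using fin x by (intro card_Diff1_less) auto
      ultimately have "card (X1 - Y) < card (X - Y)" by simp
      moreover have "X1 \<in> token_V W j" using rtrancl_adjacency_token_V[OF first less.prems(1)] .
      ultimately have "(X1, Y) \<in> (adjacency (token_E W F j))\<^sup>*" using less.hyps less.prems(2) by blast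
      then show ?thesis using first by simp
    qed simp
  qed
qed

section \<open>Lifting token moves of G - {a, b}\<close>

lemma induced_4cycle_connected_by_ladder:
  assumes two: "\<forall>e\<in>E. card e = 2" and cycle: "induced_4cycle V E P Q R T"
  shows "connected_by_ladder V E {P, Q} {T, R}"
proof -
  define \<phi> :: "bool \<times> nat \<Rightarrow> 'a" where
    "\<phi> = (\<lambda>(s, i). if i = 0 then (if s then Q else P) else (if s then R else T))"
  have verts: "ladder_verts 1 = {(False, 0), (True, 0), (False, 1), (True, 1)}"
    unfolding ladder_verts_def by auto
  have no_loops: "{x} \<notin> E" for x using two by force
  have "distinct [P, Q, R, T]" "{P, Q, R, T} \<subseteq> V"
    and edges: "{P, Q} \<in> E" "{Q, R} \<in> E" "{R, T} \<in> E" "{T, P} \<in> E"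
    and non_edges: "{P, R} \<notin> E" "{Q, T} \<notin> E"
    using cycle unfolding induced_4cycle_def by blast+
  moreover have "{Q, P} \<in> E" "{R, Q} \<in> E" "{T, R} \<in> E" "{P, T} \<in> E" "{R, P} \<notin> E" "{T, Q} \<notin> E"
    using edges non_edges by (simp_all add: insert_commute)
  ultimately have "induced_ladder V E 1 \<phi>"
    unfolding induced_ladder_def verts by (auto simp: \<phi>_def ladder_adj_iff inj_on_def no_loops)
  moreover have "{P, Q} \<in> ladder_rungs 1 \<phi>" "{T, R} \<in> ladder_rungs 1 \<phi>"
    unfolding ladder_rungs_def \<phi>_def by force+
  ultimately show ?thesis unfolding connected_by_ladder_def by blast
qed

lemma insert_token_V:
  assumes "X \<in> token_V W j" "finite W" "W \<subseteq> V" "c \<in> V - W"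
  shows "insert c X \<in> token_V V (Suc j)"
proof -
  have "finite X" "X \<subseteq> W" "card X = j" using assms(1,2) token_V_finite unfolding token_V_def by blast+
  moreover have "c \<notin> X" using \<open>X \<subseteq> W\<close> assms(4) by blast
  ultimately show ?thesis using assms(3,4) unfolding token_V_def by auto
qed

lemma simple_graph_token:
  assumes "simple_graph V E"
  shows "simple_graph (token_V V k) (token_E V E k)"
  unfolding simple_graph_def
proof (intro conjI ballI)
  show "finite (token_V V k)"
    using assms unfolding simple_graph_def token_V_def by (simp add: finite_subset)
  fix e assume "e \<in> token_E V E k"
  then obtain A B where e: "e = {A, B}" "A \<in> token_V V k" "B \<in> token_V V k" "symdiff A B \<in> E"
    unfolding mem_token_E by (elim exE conjE) (rule that; assumption)
  have "symdiff A B \<noteq> {}" using assms e(4) unfolding simple_graph_def by fastforce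
  then have "A \<noteq> B" by (rule symdiff_nonempty_neq)
  then show "e \<subseteq> token_V V k" "card e = 2" using e by auto
qed

lemma lifted_token_move_induced_4cycle:
  assumes graph: "simple_graph V E" and ab: "{a, b} \<in> E"
    and move: "(X, Y) \<in> adjacency (token_E (V - {a, b}) (induced_E E (V - {a, b})) j)"
  shows "induced_4cycle (token_V V (Suc j)) (token_E V E (Suc j))
    (insert a X) (insert b X) (insert b Y) (insert a Y)"
proof -
  define W where "W = V - {a, b}"
  have "a \<noteq> b" "a \<in> V" "b \<in> V" using simple_graph_edge_distinct[OF graph ab] by auto
  have "finite W" "W \<subseteq> V" using graph unfolding simple_graph_def W_def by auto
  have two: "\<forall>e\<in>E. card e = 2" using graph unfolding simple_graph_def by blast
  have X: "X \<in> token_V W j" and Y: "Y \<in> token_V W j"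
    using adjacency_token_E_token_V[OF move] unfolding W_def by auto
  then have "a \<notin> X" "b \<notin> X" "a \<notin> Y" "b \<notin> Y" unfolding token_V_def W_def by auto
  have "symdiff X Y \<in> induced_E E W"
    using move X Y unfolding adjacency_def W_def by (simp add: token_edge_iff)
  then have "symdiff X Y \<in> E" and "symdiff X Y \<subseteq> W" unfolding induced_E_def by auto
  then have "card (symdiff X Y) = 2" using two by blast
  then have "finite (symdiff X Y)" "symdiff X Y \<noteq> {}" by (auto intro: card_ge_0_finite)
  have "{a, b} \<inter> symdiff X Y = {}" using \<open>symdiff X Y \<subseteq> W\<close> unfolding W_def by blast
  then have "card ({a, b} \<union> symdiff X Y) = 4"
    using \<open>finite (symdiff X Y)\<close> \<open>card (symdiff X Y) = 2\<close> \<open>a \<noteq> b\<close> by (simp add: card_Un_disjoint)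
  then have diagonal: "{a, b} \<union> symdiff X Y \<notin> E" using two by force
  define P Q R T where "P = insert a X" and "Q = insert b X" and "R = insert b Y" and "T = insert a Y"
  have tokens: "P \<in> token_V V (Suc j)" "Q \<in> token_V V (Suc j)"
    "R \<in> token_V V (Suc j)" "T \<in> token_V V (Suc j)"
    unfolding P_def Q_def R_def T_def
    using insert_token_V[OF X \<open>finite W\<close> \<open>W \<subseteq> V\<close>] insert_token_V[OF Y \<open>finite W\<close> \<open>W \<subseteq> V\<close>]
      \<open>a \<in> V\<close> \<open>b \<in> V\<close> unfolding W_def by auto
  have moves: "symdiff P Q = {a, b}" "symdiff Q R = symdiff X Y" "symdiff R T = {a, b}"
    "symdiff T P = symdiff X Y" "symdiff P R = {a, b} \<union> symdiff X Y"
    "symdiff Q T = {a, b} \<union> symdiff X Y"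
    unfolding P_def Q_def R_def T_def
    using \<open>a \<notin> X\<close> \<open>b \<notin> X\<close> \<open>a \<notin> Y\<close> \<open>b \<notin> Y\<close> \<open>a \<noteq> b\<close>
    by (simp_all add: symdiff_insert_insert symdiff_commute[of Y X] symdiff_self insert_commute[of b a])
  have "P \<noteq> Q" "Q \<noteq> R" "R \<noteq> T" "T \<noteq> P" "P \<noteq> R" "Q \<noteq> T"
    using symdiff_nonempty_neq[of P Q] symdiff_nonempty_neq[of Q R] symdiff_nonempty_neq[of R T]
      symdiff_nonempty_neq[of T P] symdiff_nonempty_neq[of P R] symdiff_nonempty_neq[of Q T]
    by (simp_all add: moves \<open>symdiff X Y \<noteq> {}\<close>)
  then have "distinct [P, Q, R, T]" by auto
  moreover have "{P, Q} \<in> token_E V E (Suc j)" "{Q, R} \<in> token_E V E (Suc j)"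
    "{R, T} \<in> token_E V E (Suc j)" "{T, P} \<in> token_E V E (Suc j)"
    "{P, R} \<notin> token_E V E (Suc j)" "{Q, T} \<notin> token_E V E (Suc j)"
    using tokens moves ab \<open>symdiff X Y \<in> E\<close> diagonal by (simp_all add: token_edge_iff)
  ultimately show ?thesis
    using tokens unfolding induced_4cycle_def P_def Q_def R_def T_def by blast
qed

lemma token_move_lifts_to_ladder:
  assumes graph: "simple_graph V E" and ab: "{a, b} \<in> E"
    and move: "(X, Y) \<in> adjacency (token_E (V - {a, b}) (induced_E E (V - {a, b})) j)"
  shows "({insert a X, insert b X}, {insert a Y, insert b Y})
    \<in> ladder_rel (token_V V (Suc j)) (token_E V E (Suc j))"
proof -
  note cycle = lifted_token_move_induced_4cycle[OF graph ab move]
  have "\<forall>e\<in>token_E V E (Suc j). card e = 2"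
    using simple_graph_token[OF graph] unfolding simple_graph_def by blast
  from induced_4cycle_connected_by_ladder[OF this cycle]
  have "connected_by_ladder (token_V V (Suc j)) (token_E V E (Suc j))
      {insert a X, insert b X} {insert a Y, insert b Y}" .
  moreover have "{insert a X, insert b X} \<in> token_E V E (Suc j)"
    "{insert a Y, insert b Y} \<in> token_E V E (Suc j)"
    using cycle unfolding induced_4cycle_def by (simp_all add: insert_commute)
  ultimately show ?thesis unfolding ladder_rel_def by simp
qed

lemma token_ladder_class_labelled:
  assumes "simple_graph V E" "C4_free V E" "diamond_free V E"
    and "(e, e') \<in> ladder_equiv (token_V V k) (token_E V E k)"
  shows "e' \<in> {{A, B} | A B. A \<in> token_V V k \<and> B \<in> token_V V k \<and> symdiff A B = edge_label e}"
proof -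
  have chorded: "chorded_4cycles E" by (rule C4_diamond_free_chorded_4cycles[OF assms(1-3)])
  have two: "\<forall>e\<in>E. card e = 2" using assms(1) unfolding simple_graph_def by blast
  have "e' \<in> token_E V E k" using ladder_equiv_subset assms(4) by blast
  then obtain A B where "e' = {A, B}" "A \<in> token_V V k" "B \<in> token_V V k"
    unfolding mem_token_E by (elim exE conjE) (rule that; assumption)
  moreover have "edge_label e = edge_label e'"
    using ladder_equiv_invariant[OF token_connected_by_ladder_same_label[OF chorded two] assms(4)] .
  then have "symdiff A B = edge_label e" using \<open>e' = {A, B}\<close> by (simp add: edge_label_doubleton)
  ultimately show ?thesis by (intro CollectI exI conjI) (rule refl | assumption)+
qed

lemma lifted_rung_token_E:
  assumes "simple_graph V E" "{a, b} \<in> E" "X \<in> token_V (V - {a, b}) j"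
  shows "{insert a X, insert b X} \<in> token_E V E (Suc j)"
proof -
  have "a \<noteq> b" "a \<in> V" "b \<in> V" using simple_graph_edge_distinct[OF assms(1,2)] by auto
  have "finite V" using assms(1) unfolding simple_graph_def by blast
  then have "insert a X \<in> token_V V (Suc j)" "insert b X \<in> token_V V (Suc j)"
    using insert_token_V[OF assms(3)] \<open>a \<in> V\<close> \<open>b \<in> V\<close> by auto
  moreover have "a \<notin> X" "b \<notin> X" using assms(3) unfolding token_V_def by auto
  then have "symdiff (insert a X) (insert b X) = {a, b}"
    using \<open>a \<noteq> b\<close> by (simp add: symdiff_insert_insert symdiff_self)
  ultimately show ?thesis using assms(2) by (simp add: token_edge_iff)
qed

lemma token_edges_labelled_eq_lifted_rungs:
  assumes "finite V" "a \<in> V" "b \<in> V" "a \<noteq> b"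
  shows "{{A, B} | A B. A \<in> token_V V (Suc j) \<and> B \<in> token_V V (Suc j) \<and> symdiff A B = {a, b}}
    = (\<lambda>X. {insert a X, insert b X}) ` token_V (V - {a, b}) j"
proof (intro equalityI subsetI)
  have lift: "{A, B} \<in> (\<lambda>X. {insert a X, insert b X}) ` token_V (V - {a, b}) j"
    if A: "A \<in> token_V V (Suc j)" and B: "B \<in> token_V V (Suc j)" and "symdiff A B = {a, b}" "a \<in> A"
    for A B
  proof -
    have "finite A" "finite B" "card A = card B"
      using A B token_V_finite assms(1) unfolding token_V_def by auto
    then obtain C where C: "A = insert a C" "B = insert b C" "a \<notin> C" "b \<notin> C"
      by (rule symdiff_eq_doubletonE[OF _ _ _ \<open>symdiff A B = {a, b}\<close> assms(4) \<open>a \<in> A\<close>])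
    have "C \<in> token_V (V - {a, b}) j"
      using A C \<open>finite A\<close> unfolding token_V_def by auto
    then show ?thesis unfolding C(1,2) by (rule imageI)
  qed
  fix e assume "e \<in> {{A, B} | A B. A \<in> token_V V (Suc j) \<and> B \<in> token_V V (Suc j) \<and> symdiff A B = {a, b}}"
  then obtain A B where e: "e = {A, B}" "A \<in> token_V V (Suc j)" "B \<in> token_V V (Suc j)" "symdiff A B = {a, b}"
    unfolding mem_Collect_eq by (elim exE conjE) (rule that; assumption)
  show "e \<in> (\<lambda>X. {insert a X, insert b X}) ` token_V (V - {a, b}) j"
  proof (cases "a \<in> A")
    case True
    then show ?thesis using lift e by simp
  next
    case False
    then have "a \<in> B" using e(4) unfolding symdiff_def by blast
    then show ?thesis using lift[OF e(3,2)] e symdiff_commute[of B A] by (simp add: insert_commute)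
  qed
next
  fix e assume "e \<in> (\<lambda>X. {insert a X, insert b X}) ` token_V (V - {a, b}) j"
  then obtain X where e: "e = {insert a X, insert b X}" and X: "X \<in> token_V (V - {a, b}) j" by blast
  then have "insert a X \<in> token_V V (Suc j)" "insert b X \<in> token_V V (Suc j)"
    using insert_token_V[OF X] assms by auto
  moreover have "a \<notin> X" "b \<notin> X" using X unfolding token_V_def by auto
  then have "symdiff (insert a X) (insert b X) = {a, b}"
    using assms(4) by (simp add: symdiff_insert_insert symdiff_self)
  ultimately show "e \<in> {{A, B} | A B. A \<in> token_V V (Suc j) \<and> B \<in> token_V V (Suc j) \<and> symdiff A B = {a, b}}"
    unfolding e by (intro CollectI exI conjI) (rule refl | assumption)+
qed

lemma lifted_rungs_ladder_equiv:
  assumes graph: "simple_graph V E" and ab: "{a, b} \<in> E"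
    and conn: "connected_graph (V - {a, b}) (induced_E E (V - {a, b}))"
    and "X0 \<in> token_V (V - {a, b}) j" "X \<in> token_V (V - {a, b}) j"
  shows "({insert a X0, insert b X0}, {insert a X, insert b X})
    \<in> ladder_equiv (token_V V (Suc j)) (token_E V E (Suc j))"
proof -
  have "simple_graph (V - {a, b}) (induced_E E (V - {a, b}))"
    using simple_graph_induced_E[OF graph] by blast
  then have "(X0, X) \<in> (adjacency (token_E (V - {a, b}) (induced_E E (V - {a, b})) j))\<^sup>*"
    using token_graph_connected conn assms(4,5) unfolding connected_graph_iff_adjacency by blast
  then have "({insert a X0, insert b X0}, {insert a X, insert b X})
      \<in> (ladder_rel (token_V V (Suc j)) (token_E V E (Suc j)))\<^sup>*"
  proof (induction rule: rtrancl_induct)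
    case (step Y Z)
    then show ?case using token_move_lifts_to_ladder[OF graph ab step(2)] by simp
  qed simp
  then show ?thesis using ladder_rel_rtrancl_ladder_equiv lifted_rung_token_E[OF graph ab assms(4)] by blast
qed

lemma ladder_class_lifted_rung:
  assumes graph: "simple_graph V E" and "C4_free V E" "diamond_free V E" and ab: "{a, b} \<in> E"
    and conn: "connected_graph (V - {a, b}) (induced_E E (V - {a, b}))"
    and X0: "X0 \<in> token_V (V - {a, b}) j"
  shows "ladder_equiv (token_V V (Suc j)) (token_E V E (Suc j)) `` {{insert a X0, insert b X0}}
    = {{A, B} | A B. A \<in> token_V V (Suc j) \<and> B \<in> token_V V (Suc j) \<and> symdiff A B = {a, b}}"
    (is "?class = ?S")
proof (intro equalityI subsetI)
  have "finite V" using graph unfolding simple_graph_def by blast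
  have "a \<noteq> b" "a \<in> V" "b \<in> V" using simple_graph_edge_distinct[OF graph ab] by auto
  have lifted: "?S = (\<lambda>X. {insert a X, insert b X}) ` token_V (V - {a, b}) j"
    by (rule token_edges_labelled_eq_lifted_rungs) fact+
  have "a \<notin> X0" "b \<notin> X0" using X0 unfolding token_V_def by auto
  then have label: "edge_label {insert a X0, insert b X0} = {a, b}"
    using symdiff_insert_insert[of a X0 X0 b] \<open>a \<noteq> b\<close> by (simp add: edge_label_doubleton symdiff_self)
  fix e
  show "e \<in> ?S" if "e \<in> ?class"
  proof -
    from that have "({insert a X0, insert b X0}, e) \<in> ladder_equiv (token_V V (Suc j)) (token_E V E (Suc j))"
      by simp
    from token_ladder_class_labelled[OF assms(1-3) this] show ?thesis unfolding label .
  qed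
  show "e \<in> ?class" if labelled: "e \<in> ?S"
  proof -
    obtain X where "e = {insert a X, insert b X}" "X \<in> token_V (V - {a, b}) j"
      using labelled unfolding lifted by (rule imageE)
    then show ?thesis using lifted_rungs_ladder_equiv[OF graph ab conn X0] by simp
  qed
qed

theorem lemma24:
  fixes V :: "'a set" and E :: "'a set set" and k :: nat and a b :: 'a
  assumes "simple_graph V E"
    and "C4_free V E" and "diamond_free V E"
    and "1 \<le> k" and "k \<le> card V - 1"
    and "{a, b} \<in> E"
    and "connected_graph (V - {a, b}) (induced_E E (V - {a, b}))"
  shows "{{A, B} | A B. A \<in> token_V V k \<and> B \<in> token_V V k \<and> symdiff A B = {a, b}}
           \<in> ladder_classes (token_V V k) (token_E V E k)"
proof -
  obtain j where k: "k = Suc j" using assms(4) by (cases k) auto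
  have "finite V" using assms(1) unfolding simple_graph_def by blast
  have "a \<noteq> b" "a \<in> V" "b \<in> V" using simple_graph_edge_distinct[OF assms(1,6)] by auto
  then have "j \<le> card (V - {a, b})" using assms(5) \<open>finite V\<close> k by (simp add: card_Diff_subset)
  then obtain X0 where "X0 \<subseteq> V - {a, b}" "card X0 = j" by (rule obtain_subset_with_card_n)
  then have X0: "X0 \<in> token_V (V - {a, b}) j" unfolding token_V_def by simp
  have "{insert a X0, insert b X0} \<in> token_E V E k"
    unfolding k by (rule lifted_rung_token_E[OF assms(1,6) X0])
  then have "ladder_equiv (token_V V k) (token_E V E k) `` {{insert a X0, insert b X0}}
      \<in> ladder_classes (token_V V k) (token_E V E k)"
    unfolding ladder_classes_def by (rule quotientI)
  then show ?thesis unfolding k ladder_class_lifted_rung[OF assms(1-3,6,7) X0] .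
qed

end
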